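(* Let $k_2=\frac{1}{8\cdot3^{2/3}}$. Then for every integer $\nu\ge1$, $c_\nu\ge\frac14+k_2\nu^{-2/3}$.
   Context: A weighted digraph $D=(V,A,w)$ is a digraph without loops or parallel arcs (opposite arcs allowed) with weights $w:A\to\mathbb{R}_{\ge0}$; $w(D)$ is the total arc weight. For a partition $(X,Y)$ of $V$, $w(X,Y)$ is the total weight of arcs from $X$ to $Y$, and $\mathrm{mac}(D)=\max_{(X,Y)}w(X,Y)$. For an integer $\nu\ge1$, $c_\nu$ is the supremum of reals $c\ge0$ such that every acyclic weighted digraph $D$ whose longest directed path has exactly $\nu$ vertices satisfies $\mathrm{mac}(D)\ge c\cdot w(D)$. *)

theory Defs
  imports Complex_Main "HOL-Library.Extended_Real"
begin

text \<open>A weighted digraph: finite vertex set V (vertices represented by naturals,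
  which is no loss of generality for finite digraphs), arc set A \<subseteq> V \<times> V
  without loops (parallel arcs are impossible since A is a set; opposite arcs allowed),
  and nonnegative weights w on the arcs.\<close>
definition weighted_digraph :: "nat set \<Rightarrow> (nat \<times> nat) set \<Rightarrow> (nat \<times> nat \<Rightarrow> real) \<Rightarrow> bool" where
  "weighted_digraph V A w \<longleftrightarrow> finite V \<and> A \<subseteq> V \<times> V \<and> (\<forall>v. (v, v) \<notin> A)
     \<and> (\<forall>a\<in>A. w a \<ge> 0)"

definition total_weight :: "(nat \<times> nat) set \<Rightarrow> (nat \<times> nat \<Rightarrow> real) \<Rightarrow> real" where
  "total_weight A w = (\<Sum>a\<in>A. w a)"

definition cut_weight :: "(nat \<times> nat) set \<Rightarrow> (nat \<times> nat \<Rightarrow> real) \<Rightarrow> nat set \<Rightarrow> nat set \<Rightarrow> real" where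
  "cut_weight A w X Y = (\<Sum>a\<in>A \<inter> (X \<times> Y). w a)"

definition mac :: "nat set \<Rightarrow> (nat \<times> nat) set \<Rightarrow> (nat \<times> nat \<Rightarrow> real) \<Rightarrow> real" where
  "mac V A w = Max {cut_weight A w X (V - X) | X. X \<subseteq> V}"

definition dpath :: "nat set \<Rightarrow> (nat \<times> nat) set \<Rightarrow> nat list \<Rightarrow> bool" where
  "dpath V A p \<longleftrightarrow> p \<noteq> [] \<and> distinct p \<and> set p \<subseteq> V
     \<and> (\<forall>i. Suc i < length p \<longrightarrow> (p ! i, p ! Suc i) \<in> A)"

definition longest_path_vertices :: "nat set \<Rightarrow> (nat \<times> nat) set \<Rightarrow> nat \<Rightarrow> bool" where
  "longest_path_vertices V A \<nu> \<longleftrightarrow>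
     (\<exists>p. dpath V A p \<and> length p = \<nu>) \<and> (\<forall>p. dpath V A p \<longrightarrow> length p \<le> \<nu>)"

text \<open>c_\<nu> as an extended real supremum (it is +\<infinity> e.g. for \<nu> = 1, where all weights vanish).\<close>
definition c_nu :: "nat \<Rightarrow> ereal" where
  "c_nu \<nu> = Sup {ereal c | c. c \<ge> 0 \<and>
     (\<forall>V A w. weighted_digraph V A w \<and> acyclic A \<and> longest_path_vertices V A \<nu>
        \<longrightarrow> mac V A w \<ge> c * total_weight A w)}"

definition k2 :: real where
  "k2 = 1 / (8 * 3 powr (2/3))"

end

theory Submission
  imports Defs "HOL-Library.FuncSet"
begin

text \<open>
  Give each vertex its level: the number of vertices of a longest path ending there, minus one.
  Levels lie below \<open>\<nu>\<close> and strictly increase along arcs. Split the levels into \<open>2T + 1\<close>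
  consecutive blocks of \<open>2h\<close> levels and cut at random: from block \<open>b\<close> a uniformly random
  set of \<open>h + T - b\<close> levels goes to the source side. Inside a block an arc is cut with probability
  \<open>(h\<^sup>2 - (T - b)\<^sup>2) / (2h(2h - 1))\<close>, between blocks \<open>b < d\<close> with probability
  \<open>(h + T - b)(h - T + d) / (4h\<^sup>2)\<close>; since the block sizes decrease, both are at least
  \<open>1/4 + g\<close> as soon as \<open>8gh\<^sup>2 \<le> h - 2T\<^sup>2\<close>. Averaging, some cut carries that fraction of the
  total weight. With \<open>T \<approx> \<nu>\<^bsup>1/3\<^esup>/4\<close> and \<open>h \<approx> \<nu>/(2(2T + 1))\<close> one may take
  \<open>g = k2 \<nu>\<^bsup>-2/3\<^esup>\<close>.
\<close>

section \<open>Counting subsets and products of sets\<close>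

lemma card_subsets_avoiding:
  assumes "finite B" "j \<in> B"
  shows "card {S. S \<subseteq> B \<and> card S = k \<and> j \<notin> S} * card B = (card B - k) * (card B choose k)"
proof -
  have "{S. S \<subseteq> B \<and> card S = k \<and> j \<notin> S} = {S. S \<subseteq> B - {j} \<and> card S = k}" by blast
  then have "card {S. S \<subseteq> B \<and> card S = k \<and> j \<notin> S} = (card B - 1) choose k"
    using assms n_subsets[of "B - {j}" k] by simp
  then show ?thesis by (simp add: binomial_absorb_comp)
qed

lemma card_subsets_containing:
  assumes "finite B" "i \<in> B"
  shows "card {S. S \<subseteq> B \<and> card S = k \<and> i \<in> S} * card B = k * (card B choose k)"
proof -
  let ?n = "card B"
  let ?in = "{S. S \<subseteq> B \<and> card S = k \<and> i \<in> S}"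
  let ?out = "{S. S \<subseteq> B \<and> card S = k \<and> i \<notin> S}"
  have split: "{S. S \<subseteq> B \<and> card S = k} = ?in \<union> ?out" by blast
  have "finite {S. S \<subseteq> B \<and> card S = k}" using assms(1) by simp
  then have "card ?in + card ?out = ?n choose k"
    unfolding n_subsets[OF assms(1), symmetric] split by (subst card_Un_disjoint) auto
  then have "card ?in * ?n + card ?out * ?n = ?n * (?n choose k)"
    by (simp flip: add_mult_distrib)
  then have "card ?in * ?n + (?n - k) * (?n choose k) = ?n * (?n choose k)"
    using card_subsets_avoiding[OF assms] by simp
  moreover have "?n * (?n choose k) = (?n - k) * (?n choose k) + k * (?n choose k)"
    by (cases "k \<le> ?n") (simp_all flip: add_mult_distrib)
  ultimately show ?thesis by linarith
qed

lemma card_subsets_containing_avoiding: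
  assumes "finite B" "i \<in> B" "j \<in> B" "i \<noteq> j"
  shows "card {S. S \<subseteq> B \<and> card S = k \<and> i \<in> S \<and> j \<notin> S} * (card B * (card B - 1))
    = k * (card B - k) * (card B choose k)"
proof -
  have "{S. S \<subseteq> B \<and> card S = k \<and> i \<in> S \<and> j \<notin> S} = {S. S \<subseteq> B - {j} \<and> card S = k \<and> i \<in> S}"
    by blast
  moreover have "card (B - {j}) = card B - 1" using assms by simp
  ultimately have "card {S. S \<subseteq> B \<and> card S = k \<and> i \<in> S \<and> j \<notin> S} * (card B - 1)
      = k * ((card B - 1) choose k)"
    using card_subsets_containing[of "B - {j}" i k] assms by simp
  then show ?thesis
    using binomial_absorb_comp[of "card B" k] by (simp add: mult_ac)
qed

lemma card_PiE_filter:
  assumes "finite I" "b \<in> I"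
  shows "card {F \<in> PiE I B. P (F b)} * card (B b) = card (PiE I B) * card {S \<in> B b. P S}"
proof -
  have "{F \<in> PiE I B. P (F b)} = PiE I (B(b := {S \<in> B b. P S}))"
    using assms(2) by (auto simp: PiE_def Pi_def)
  moreover have "card (PiE I B') = card (B' b) * (\<Prod>a\<in>I - {b}. card (B a))"
    if "\<forall>a\<in>I - {b}. B' a = B a" for B'
    using assms that by (simp add: card_PiE prod.remove)
  ultimately show ?thesis by simp
qed

lemma card_PiE_filter2:
  assumes "finite I" "b \<in> I" "d \<in> I" "b \<noteq> d"
  shows "card {F \<in> PiE I B. P (F b) \<and> Q (F d)} * (card (B b) * card (B d))
    = card (PiE I B) * (card {S \<in> B b. P S} * card {S \<in> B d. Q S})"
proof -
  define B' where "B' = B(b := {S \<in> B b. P S})"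
  have "{F \<in> PiE I B. P (F b)} = PiE I B'"
    using assms(2) by (auto simp: B'_def PiE_def Pi_def)
  then have "{F \<in> PiE I B. P (F b) \<and> Q (F d)} = {F \<in> PiE I B'. Q (F d)}" by blast
  moreover have "B' d = B d" using assms(4) by (simp add: B'_def)
  ultimately have d: "card {F \<in> PiE I B. P (F b) \<and> Q (F d)} * card (B d)
      = card (PiE I B') * card {S \<in> B d. Q S}"
    using card_PiE_filter[OF assms(1,3), of B' Q] by simp
  have b: "card (PiE I B') * card (B b) = card (PiE I B) * card {S \<in> B b. P S}"
    using card_PiE_filter[OF assms(1,2), of B P] \<open>{F \<in> PiE I B. P (F b)} = PiE I B'\<close> by simp
  have "card {F \<in> PiE I B. P (F b) \<and> Q (F d)} * (card (B b) * card (B d))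
      = (card {F \<in> PiE I B. P (F b) \<and> Q (F d)} * card (B d)) * card (B b)"
    by (simp only: mult_ac)
  also have "\<dots> = (card (PiE I B') * card (B b)) * card {S \<in> B d. Q S}"
    unfolding d by (simp only: mult_ac)
  finally show ?thesis unfolding b by (simp only: mult_ac)
qed

lemma scaled_le_of_proportion:
  fixes c E N D K :: real
  assumes "E * D = N * K" "0 < D" "0 \<le> N" "c * D \<le> K"
  shows "c * N \<le> E"
proof -
  have "c * N * D \<le> N * K" using mult_left_mono[OF assms(4,3)] by (simp add: mult_ac)
  then have "c * N * D \<le> E * D" using assms(1) by simp
  then show ?thesis using assms(2) by (simp add: mult_le_cancel_right_pos)
qed

section \<open>Random block cuts\<close>

text \<open>Position \<open>x\<close> lies in block \<open>x div n\<close>; a uniform element of \<open>block_cuts n m k\<close> is the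
  random cut putting \<open>k b\<close> of the \<open>n\<close> positions of block \<open>b\<close> on the source side.\<close>

definition block_cuts :: "nat \<Rightarrow> nat \<Rightarrow> (nat \<Rightarrow> nat) \<Rightarrow> (nat \<Rightarrow> nat set) set" where
  "block_cuts n m k = (\<Pi>\<^sub>E b\<in>{..<m}. {S. S \<subseteq> {b * n..<b * n + n} \<and> card S = k b})"

lemma mem_block_div:
  "0 < n \<Longrightarrow> (x::nat) \<in> {x div n * n..<x div n * n + n}"
proof -
  assume "0 < n"
  then have "x mod n < n" by simp
  moreover have "x div n * n + x mod n = x" by (rule div_mult_mod_eq)
  ultimately show ?thesis unfolding atLeastLessThan_iff by linarith
qed

lemma card_block_subsets:
  "card {S. S \<subseteq> {b * n..<b * n + n} \<and> card S = k} = n choose k"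
  using n_subsets[of "{b * n..<b * n + n}" k] by simp

lemma finite_block_cuts: "finite (block_cuts n m k)"
  unfolding block_cuts_def by (intro finite_PiE) auto

lemma block_cuts_nonempty:
  assumes "\<And>b. b < m \<Longrightarrow> k b \<le> n"
  shows "block_cuts n m k \<noteq> {}"
proof -
  have "{S. S \<subseteq> {b * n..<b * n + n} \<and> card S = k b} \<noteq> {}" if "b < m" for b
    using card_block_subsets[of b n "k b"] assms[OF that] by (metis card.empty zero_less_binomial_iff less_irrefl)
  then show ?thesis unfolding block_cuts_def PiE_eq_empty_iff by blast
qed

lemma block_cuts_separate_same_block:
  fixes c :: real
  assumes "0 < n" "b < m" "k b \<le> n" "c * real (n * (n - 1)) \<le> real (k b * (n - k b))"
    and "i \<noteq> j" "i div n = b" "j div n = b"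
  shows "c * card (block_cuts n m k) \<le> card {F \<in> block_cuts n m k. i \<in> F b \<and> j \<notin> F b}"
proof -
  define Blk where "Blk = {b * n..<b * n + n}"
  let ?E = "{F \<in> block_cuts n m k. i \<in> F b \<and> j \<notin> F b}"
  let ?C = "n choose k b"
  have ij: "i \<in> Blk" "j \<in> Blk" using mem_block_div[OF assms(1), of i] mem_block_div[OF assms(1), of j] assms(6,7)
    by (simp_all add: Blk_def)
  have "card ?E * ?C = card (block_cuts n m k) * card {S. S \<subseteq> Blk \<and> card S = k b \<and> i \<in> S \<and> j \<notin> S}"
    using card_PiE_filter[of "{..<m}" b "\<lambda>b. {S. S \<subseteq> {b * n..<b * n + n} \<and> card S = k b}"
        "\<lambda>S. i \<in> S \<and> j \<notin> S"] assms(2)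
    by (simp add: block_cuts_def Blk_def card_block_subsets conj_assoc)
  then have "card ?E * ?C * (n * (n - 1)) = card (block_cuts n m k) * (k b * (n - k b)) * ?C"
    using card_subsets_containing_avoiding[of Blk i j "k b"] ij assms(5)
    by (simp add: Blk_def mult_ac)
  moreover have "0 < ?C" using assms(3) by simp
  ultimately have "card ?E * (n * (n - 1)) = card (block_cuts n m k) * (k b * (n - k b))"
    by (simp add: mult_ac)
  then have "real (card ?E) * real (n * (n - 1)) = real (card (block_cuts n m k)) * real (k b * (n - k b))"
    by (simp only: of_nat_mult [symmetric])
  moreover have "2 \<le> n"
    using ij assms(5) card_mono[of Blk "{i, j}"] by (simp add: Blk_def)
  ultimately show ?thesis
    using scaled_le_of_proportion[OF _ _ _ assms(4)] by simp
qed

lemma block_cuts_separate_distinct_blocks: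
  fixes c :: real
  assumes "0 < n" "b < d" "d < m" "k b \<le> n" "k d \<le> n" "c * real (n * n) \<le> real (k b * (n - k d))"
    and "i div n = b" "j div n = d"
  shows "c * card (block_cuts n m k) \<le> card {F \<in> block_cuts n m k. i \<in> F b \<and> j \<notin> F d}"
proof -
  define Blk where "Blk = (\<lambda>b. {b * n..<b * n + n})"
  let ?E = "{F \<in> block_cuts n m k. i \<in> F b \<and> j \<notin> F d}"
  let ?Cb = "n choose k b" and ?Cd = "n choose k d"
  have ij: "i \<in> Blk b" "j \<in> Blk d"
    using mem_block_div[OF assms(1), of i] mem_block_div[OF assms(1), of j] assms(7,8)
    by (simp_all add: Blk_def)
  let ?in = "{S. S \<subseteq> Blk b \<and> card S = k b \<and> i \<in> S}"
  let ?out = "{S. S \<subseteq> Blk d \<and> card S = k d \<and> j \<notin> S}"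
  have E: "card ?E * (?Cb * ?Cd) = card (block_cuts n m k) * (card ?in * card ?out)"
    using card_PiE_filter2[of "{..<m}" b d "\<lambda>b. {S. S \<subseteq> {b * n..<b * n + n} \<and> card S = k b}"
        "\<lambda>S. i \<in> S" "\<lambda>S. j \<notin> S"] assms(2,3)
    by (simp add: block_cuts_def Blk_def card_block_subsets conj_assoc)
  have p: "card ?in * n = k b * ?Cb"
    using card_subsets_containing[of "Blk b" i "k b"] ij by (simp add: Blk_def)
  have q: "card ?out * n = (n - k d) * ?Cd"
    using card_subsets_avoiding[of "Blk d" j "k d"] ij by (simp add: Blk_def)
  have "card ?E * (?Cb * ?Cd) * (n * n) = card (block_cuts n m k) * ((card ?in * n) * (card ?out * n))"
    unfolding E by (simp only: mult_ac)
  also have "\<dots> = card (block_cuts n m k) * (k b * (n - k d)) * (?Cb * ?Cd)"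
    unfolding p q by (simp only: mult_ac)
  finally have "card ?E * (?Cb * ?Cd) * (n * n) = card (block_cuts n m k) * (k b * (n - k d)) * (?Cb * ?Cd)" .
  moreover have "0 < ?Cb * ?Cd" using assms(4,5) by simp
  ultimately have "card ?E * (n * n) = card (block_cuts n m k) * (k b * (n - k d))"
    by (simp add: mult_ac)
  then have "real (card ?E) * real (n * n) = real (card (block_cuts n m k)) * real (k b * (n - k d))"
    by (simp only: of_nat_mult [symmetric])
  then show ?thesis
    using scaled_le_of_proportion[OF _ _ _ assms(6)] assms(1) by simp
qed

lemma block_cuts_separate:
  fixes c :: real
  assumes sizes: "\<And>b. b < m \<Longrightarrow> k b \<le> n"
    and same: "\<And>b. b < m \<Longrightarrow> c * real (n * (n - 1)) \<le> real (k b * (n - k b))"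
    and distinct: "\<And>b d. b < d \<Longrightarrow> d < m \<Longrightarrow> c * real (n * n) \<le> real (k b * (n - k d))"
    and "i < j" "j < n * m"
  shows "c * card (block_cuts n m k) \<le> card {F \<in> block_cuts n m k. i \<in> F (i div n) \<and> j \<notin> F (j div n)}"
proof -
  have "0 < n" using \<open>j < n * m\<close> by (cases n) auto
  have "j div n < m" using \<open>j < n * m\<close> by (simp add: less_mult_imp_div_less mult.commute)
  moreover have "i div n \<le> j div n" using \<open>i < j\<close> by (simp add: div_le_mono)
  ultimately consider "i div n = j div n" | "i div n < j div n"
    by linarith
  then show ?thesis
  proof cases
    case 1
    then show ?thesis
      using block_cuts_separate_same_block[of n "j div n" m k c i j] \<open>0 < n\<close> \<open>j div n < m\<close>
        sizes same \<open>i < j\<close> by simp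
  next
    case 2
    then show ?thesis
      using block_cuts_separate_distinct_blocks[of n "i div n" "j div n" m k c i j] \<open>0 < n\<close>
        \<open>j div n < m\<close> sizes distinct by simp
  qed
qed

section \<open>Levels of an acyclic digraph and averaged cuts\<close>

lemma dpath_rtrancl:
  assumes "dpath V A p" "i + k < length p"
  shows "(p ! i, p ! (i + k)) \<in> A\<^sup>*"
  using assms(2)
proof (induction k)
  case (Suc k)
  then have "(p ! i, p ! (i + k)) \<in> A\<^sup>*" by simp
  moreover have "(p ! (i + k), p ! Suc (i + k)) \<in> A" using assms(1) Suc.prems unfolding dpath_def by auto
  ultimately show ?case by simp
qed simp

lemma dpath_snoc:
  assumes "A \<subseteq> V \<times> V" "acyclic A" "dpath V A p" "(last p, v) \<in> A"
  shows "dpath V A (p @ [v])"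
proof -
  have "p \<noteq> []" using assms(3) unfolding dpath_def by simp
  have "v \<notin> set p"
  proof
    assume "v \<in> set p"
    then obtain i where i: "i < length p" "p ! i = v" by (auto simp: in_set_conv_nth)
    then have "(v, last p) \<in> A\<^sup>*"
      using dpath_rtrancl[OF assms(3), of i "length p - 1 - i"] \<open>p \<noteq> []\<close> by (simp add: last_conv_nth)
    then have "(v, v) \<in> A\<^sup>+" using assms(4) by (rule rtrancl_into_trancl1)
    then show False using assms(2) unfolding acyclic_def by blast
  qed
  moreover have "((p @ [v]) ! i, (p @ [v]) ! Suc i) \<in> A" if "Suc i < length (p @ [v])" for i
  proof (cases "Suc i < length p")
    case True
    then show ?thesis using assms(3) unfolding dpath_def by (simp add: nth_append)
  next
    case False
    then have "i = length p - 1" using that by simp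
    then show ?thesis using assms(4) \<open>p \<noteq> []\<close> by (simp add: nth_append last_conv_nth)
  qed
  ultimately show ?thesis using assms(1,3,4) unfolding dpath_def by auto
qed

lemma acyclic_level_function:
  assumes "A \<subseteq> V \<times> V" "acyclic A" "longest_path_vertices V A \<nu>"
  obtains f where "\<And>v. v \<in> V \<Longrightarrow> f v < \<nu>" "\<And>u v. (u, v) \<in> A \<Longrightarrow> f u < f v"
proof -
  define P where "P v = {length p | p. dpath V A p \<and> last p = v}" for v
  have bound: "P v \<subseteq> {..\<nu>}" for v
    using assms(3) unfolding P_def longest_path_vertices_def by auto
  then have fin: "finite (P v)" for v
    using finite_subset by blast
  have one: "1 \<in> P v" if "v \<in> V" for v
  proof -
    have "dpath V A [v]" using that unfolding dpath_def by simp
    then show ?thesis unfolding P_def by force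
  qed
  have pos: "0 < Max (P v)" if "v \<in> V" for v
    using Max_ge[OF fin one[OF that]] by simp
  have le: "Max (P v) \<le> \<nu>" if "v \<in> V" for v
    using Max_in[OF fin, of v] one[OF that] bound[of v] by auto
  have "Max (P u) < Max (P v)" if "(u, v) \<in> A" for u v
  proof -
    have "u \<in> V" using that assms(1) by auto
    then have "Max (P u) \<in> P u" using one fin by (intro Max_in) auto
    then obtain p where p: "dpath V A p" "last p = u" "length p = Max (P u)"
      unfolding P_def by auto
    then have "length (p @ [v]) \<in> P v"
      using dpath_snoc[OF assms(1,2) p(1)] that unfolding P_def by force
    then have "length (p @ [v]) \<le> Max (P v)" by (rule Max_ge[OF fin])
    then show ?thesis using p(3) by simp
  qed
  then show ?thesis
    using that[of "\<lambda>v. Max (P v) - 1"] pos le assms(1) by force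
qed

lemma cut_weight_le_mac:
  assumes "finite V" "X \<subseteq> V"
  shows "cut_weight A w X (V - X) \<le> mac V A w"
proof -
  have "{cut_weight A w X (V - X) | X. X \<subseteq> V} = (\<lambda>X. cut_weight A w X (V - X)) ` Pow V" by auto
  then show ?thesis unfolding mac_def using assms by (intro Max_ge) auto
qed

lemma mac_ge_of_cut_family:
  fixes c :: real and X :: "'f \<Rightarrow> nat set"
  assumes D: "weighted_digraph V A w" and "finite Fam" "Fam \<noteq> {}"
    and X: "\<And>F. F \<in> Fam \<Longrightarrow> X F \<subseteq> V"
    and often_cut: "\<And>a. a \<in> A \<Longrightarrow> c * card Fam \<le> card {F \<in> Fam. a \<in> X F \<times> (V - X F)}"
  shows "c * total_weight A w \<le> mac V A w"
proof -
  have "finite V" "finite A" "\<forall>a\<in>A. 0 \<le> w a"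
    using D finite_subset unfolding weighted_digraph_def by (auto intro: finite_cartesian_product)
  have "card Fam * (c * total_weight A w) = (\<Sum>a\<in>A. w a * (c * card Fam))"
    unfolding total_weight_def by (simp add: sum_distrib_left sum_distrib_right mult_ac)
  also have "\<dots> \<le> (\<Sum>a\<in>A. w a * card {F \<in> Fam. a \<in> X F \<times> (V - X F)})"
    using often_cut \<open>\<forall>a\<in>A. 0 \<le> w a\<close> by (intro sum_mono mult_left_mono) auto
  also have "\<dots> = (\<Sum>a\<in>A. \<Sum>F\<in>Fam. if a \<in> X F \<times> (V - X F) then w a else 0)"
    using \<open>finite Fam\<close> by (simp add: sum.inter_filter [symmetric] mult.commute)
  also have "\<dots> = (\<Sum>F\<in>Fam. cut_weight A w (X F) (V - X F))"
    unfolding cut_weight_def using \<open>finite A\<close> by (subst sum.swap) (simp add: sum.inter_restrict)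
  also have "\<dots> \<le> (\<Sum>F\<in>Fam. mac V A w)"
    using cut_weight_le_mac[OF \<open>finite V\<close> X] by (intro sum_mono) auto
  also have "\<dots> = card Fam * mac V A w" by simp
  finally show ?thesis
    using \<open>finite Fam\<close> \<open>Fam \<noteq> {}\<close> by (simp add: card_gt_0_iff)
qed

lemma mac_ge_of_level_function:
  fixes c :: real
  assumes D: "weighted_digraph V A w"
    and f: "\<And>v. v \<in> V \<Longrightarrow> f v < n * m" "\<And>u v. (u, v) \<in> A \<Longrightarrow> f u < f v"
    and sizes: "\<And>b. b < m \<Longrightarrow> k b \<le> n"
    and same: "\<And>b. b < m \<Longrightarrow> c * real (n * (n - 1)) \<le> real (k b * (n - k b))"
    and distinct: "\<And>b d. b < d \<Longrightarrow> d < m \<Longrightarrow> c * real (n * n) \<le> real (k b * (n - k d))"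
  shows "c * total_weight A w \<le> mac V A w"
proof (rule mac_ge_of_cut_family[OF D finite_block_cuts block_cuts_nonempty[OF sizes]])
  let ?X = "\<lambda>F. {v \<in> V. f v \<in> F (f v div n)}"
  show "?X F \<subseteq> V" for F by blast
  fix a assume "a \<in> A"
  then obtain u v where a: "a = (u, v)" "u \<in> V" "v \<in> V"
    using D unfolding weighted_digraph_def by auto
  then have "{F \<in> block_cuts n m k. a \<in> ?X F \<times> (V - ?X F)}
      = {F \<in> block_cuts n m k. f u \<in> F (f u div n) \<and> f v \<notin> F (f v div n)}"
    by auto
  then show "c * card (block_cuts n m k) \<le> card {F \<in> block_cuts n m k. a \<in> ?X F \<times> (V - ?X F)}"
    using block_cuts_separate[OF sizes same distinct f(2) f(1)] \<open>a \<in> A\<close> a by simp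
qed

section \<open>Choice of the block parameters\<close>

lemma bracketing_index:
  fixes f :: "nat \<Rightarrow> nat"
  assumes "f 0 \<le> x" "x < f N"
  obtains k where "f k \<le> x" "x < f (Suc k)"
  using assms(2)
proof (induction N)
  case 0
  then show ?case using assms(1) by simp
next
  case (Suc N)
  then show ?case by (cases "x < f N") (auto simp: not_less)
qed

lemma block_parameters_exist:
  fixes \<nu> :: nat
  assumes "1 \<le> \<nu>"
  obtains T h where "64 * T ^ 3 \<le> \<nu>" "\<nu> < 64 * (T + 1) ^ 3"
    "\<nu> \<le> 2 * (2 * T + 1) * h" "2 * (2 * T + 1) * h < \<nu> + 2 * (2 * T + 1)"
proof -
  have "\<nu> + 1 \<le> (\<nu> + 1) ^ 3" by (simp add: self_le_power)
  then have "\<nu> < 64 * (\<nu> + 1) ^ 3" by linarith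
  then obtain T where T: "64 * T ^ 3 \<le> \<nu>" "\<nu> < 64 * (T + 1) ^ 3"
    using bracketing_index[of "\<lambda>k. 64 * k ^ 3" \<nu> "\<nu> + 1"] by auto
  have "\<nu> - 1 < 2 * (2 * T + 1) * \<nu>" using assms by simp
  then obtain k where "2 * (2 * T + 1) * k \<le> \<nu> - 1" "\<nu> - 1 < 2 * (2 * T + 1) * Suc k"
    using bracketing_index[of "\<lambda>k. 2 * (2 * T + 1) * k" "\<nu> - 1" \<nu>] by auto
  then show ?thesis
    using that[OF T, of "Suc k"] assms by simp
qed

lemma parameter_bound_small:
  fixes v x :: real
  assumes "1 \<le> v" "v \<le> 63" "0 \<le> x" "2 * x \<le> v + 1"
  shows "x ^ 3 \<le> 9 * v ^ 2"
proof -
  have "v ^ 3 \<le> 63 * v ^ 2" "3 * v \<le> 3 * v ^ 2"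
    using assms(1,2) by (simp_all add: power2_eq_square power3_eq_cube)
  moreover have "1 \<le> v ^ 2" using assms(1) by (simp add: one_le_power)
  moreover have "(2 * x) ^ 3 \<le> (v + 1) ^ 3" using assms(3,4) by (intro power_mono) auto
  ultimately show ?thesis by (simp add: power3_eq_cube power2_eq_square algebra_simps)
qed

lemma parameter_bound_large:
  fixes t v x :: real
  assumes "1 \<le> t" "64 * t ^ 3 \<le> v" "v < 64 * (t + 1) ^ 3"
    and "v \<le> 2 * (2 * t + 1) * x" "2 * (2 * t + 1) * x < v + 2 * (2 * t + 1)"
  shows "32 * t ^ 2 \<le> 3 * x" "x ^ 3 \<le> 4 * v ^ 2"
proof -
  define s where "s = 2 * t + 1"
  have "0 < s" "s \<le> 3 * t" using assms(1) by (simp_all add: s_def)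
  have "0 < 64 * t ^ 3" using assms(1) by simp
  then have "0 < (2 * s) * x" unfolding s_def using assms(2,4) by linarith
  with \<open>0 < s\<close> have "0 \<le> x" by (simp add: zero_less_mult_iff)
  have "t * (64 * t ^ 2) \<le> t * (6 * x)"
    using assms(2,4) mult_right_mono[OF \<open>s \<le> 3 * t\<close> \<open>0 \<le> x\<close>]
    by (simp add: s_def power3_eq_cube power2_eq_square algebra_simps)
  then show "32 * t ^ 2 \<le> 3 * x" using assms(1) by simp
  have "20 * s \<le> v"
  proof -
    have "t * 1 \<le> t * t ^ 2" using assms(1) by (intro mult_left_mono) (simp_all add: one_le_power)
    then have "t \<le> t ^ 3" by (simp add: power3_eq_cube power2_eq_square)
    then show ?thesis using \<open>s \<le> 3 * t\<close> assms(1,2) by linarith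
  qed
  then have "20 * s * x \<le> 11 * v" using assms(5) by (simp add: s_def algebra_simps)
  then have "(20 * s * x) ^ 3 \<le> (11 * v) ^ 3"
    using \<open>0 < s\<close> \<open>0 \<le> x\<close> by (intro power_mono) auto
  then have cube: "8000 * s ^ 3 * x ^ 3 \<le> 1331 * v ^ 3" by (simp add: power_mult_distrib)
  have "(6 * (t + 1)) ^ 3 \<le> (4 * s) ^ 3"
    using assms(1) by (intro power_mono) (auto simp: s_def)
  then have "216 * (t + 1) ^ 3 \<le> 64 * s ^ 3" by (simp only: power_mult_distrib) simp
  then have "27 * v \<le> 512 * s ^ 3" using assms(3) by linarith
  then have "1331 * v ^ 2 * (27 * v) \<le> 1331 * v ^ 2 * (512 * s ^ 3)" by (rule mult_left_mono) simp
  with cube have "s ^ 3 * (216000 * x ^ 3) \<le> s ^ 3 * (681472 * v ^ 2)"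
    by (simp add: power3_eq_cube power2_eq_square algebra_simps)
  then have "3375 * x ^ 3 \<le> 10648 * v ^ 2" using \<open>0 < s\<close> by simp
  then show "x ^ 3 \<le> 4 * v ^ 2" using zero_le_power2[of v] by linarith
qed

lemma sextic_bound_of_cubic_bound:
  fixes t v x :: real
  assumes "32 * t ^ 2 \<le> 3 * x" "x ^ 3 \<le> 4 * v ^ 2"
  shows "x ^ 6 \<le> 9 * v ^ 2 * (x - 2 * t ^ 2) ^ 3"
proof -
  have "0 \<le> x" using assms(1) zero_le_power2[of t] by linarith
  then have "0 \<le> x ^ 3" by simp
  have "x ^ 6 = x ^ 3 * x ^ 3" by (simp flip: power_add)
  also have "\<dots> \<le> 4 * v ^ 2 * x ^ 3"
    using mult_right_mono[OF assms(2) \<open>0 \<le> x ^ 3\<close>] .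
  also have "\<dots> = 4 * (v ^ 2 * x ^ 3)" by (simp only: mult_ac)
  also have "\<dots> \<le> (9 * (13 / 16) ^ 3) * (v ^ 2 * x ^ 3)"
    using \<open>0 \<le> x ^ 3\<close> by (intro mult_right_mono) (simp_all add: power_divide)
  also have "\<dots> = 9 * v ^ 2 * (13 / 16 * x) ^ 3" by (simp only: power_mult_distrib mult_ac)
  also have "\<dots> \<le> 9 * v ^ 2 * (x - 2 * t ^ 2) ^ 3"
    using assms(1) \<open>0 \<le> x\<close> by (intro mult_left_mono power_mono) auto
  finally show ?thesis .
qed

lemma block_parameters:
  fixes \<nu> :: nat
  assumes "1 \<le> \<nu>"
  obtains h T :: nat where "\<nu> \<le> 2 * h * (2 * T + 1)" "2 * T + 1 \<le> h" "2 * real T ^ 2 \<le> real h"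
    "real h ^ 6 \<le> 9 * real \<nu> ^ 2 * (real h - 2 * real T ^ 2) ^ 3"
proof -
  obtain T h where T: "64 * T ^ 3 \<le> \<nu>" "\<nu> < 64 * (T + 1) ^ 3"
    and h: "\<nu> \<le> 2 * (2 * T + 1) * h" "2 * (2 * T + 1) * h < \<nu> + 2 * (2 * T + 1)"
    using block_parameters_exist[OF assms] .
  have h_nat: "\<nu> \<le> 2 * h * (2 * T + 1)" using h(1) by (simp add: mult_ac)
  have "1 \<le> h" using h(1) assms by (cases h) auto
  show ?thesis
  proof (cases "T = 0")
    case True
    have "real h ^ 3 \<le> 9 * real \<nu> ^ 2"
      using parameter_bound_small[of "real \<nu>" "real h"] T(2) h(2) assms True by simp
    then have "real h ^ 3 * real h ^ 3 \<le> 9 * real \<nu> ^ 2 * real h ^ 3"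
      by (rule mult_right_mono) simp
    then show ?thesis
      using that[OF h_nat] True \<open>1 \<le> h\<close> by (simp add: power_add [symmetric])
  next
    case False
    let ?t = "real T" and ?x = "real h" and ?v = "real \<nu>"
    have "64 * ?t ^ 3 \<le> ?v" "?v < 64 * (?t + 1) ^ 3" "?v \<le> 2 * (2 * ?t + 1) * ?x"
      "2 * (2 * ?t + 1) * ?x < ?v + 2 * (2 * ?t + 1)"
      using of_nat_mono[where 'a = real, OF T(1)] of_nat_less_iff[where 'a = real, THEN iffD2, OF T(2)]
        of_nat_mono[where 'a = real, OF h(1)] of_nat_less_iff[where 'a = real, THEN iffD2, OF h(2)]
      by (simp_all add: algebra_simps)
    moreover have "1 \<le> ?t" using False by simp
    ultimately have "32 * ?t ^ 2 \<le> 3 * ?x" "?x ^ 3 \<le> 4 * ?v ^ 2"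
      using parameter_bound_large by blast+
    have "?t \<le> ?t ^ 2" using \<open>1 \<le> ?t\<close> by (simp add: power2_eq_square)
    then have "2 * ?t + 1 \<le> ?x" using \<open>32 * ?t ^ 2 \<le> 3 * ?x\<close> \<open>1 \<le> ?t\<close> by linarith
    then have "2 * T + 1 \<le> h" by (simp flip: of_nat_le_iff)
    moreover have "2 * ?t ^ 2 \<le> ?x" using \<open>32 * ?t ^ 2 \<le> 3 * ?x\<close> by simp
    moreover have "?x ^ 6 \<le> 9 * ?v ^ 2 * (?x - 2 * ?t ^ 2) ^ 3"
      using \<open>32 * ?t ^ 2 \<le> 3 * ?x\<close> \<open>?x ^ 3 \<le> 4 * ?v ^ 2\<close> by (rule sextic_bound_of_cubic_bound)
    ultimately show ?thesis using that[OF h_nat] by blast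
  qed
qed

lemma k2_term_cube:
  fixes \<nu> :: nat
  assumes "1 \<le> \<nu>"
  shows "(k2 * real \<nu> powr (-2/3)) ^ 3 = 1 / (4608 * real \<nu> ^ 2)"
proof -
  have "(3 powr (2/3) :: real) ^ 3 = 9" by (simp add: powr_power)
  then have k2: "k2 ^ 3 = 1 / 4608" unfolding k2_def by (simp add: power_divide power_mult_distrib)
  have "(real \<nu> powr (-2/3)) ^ 3 = real \<nu> powr (-2)"
    using assms by (simp add: powr_power)
  also have "\<dots> = 1 / real \<nu> ^ 2"
    using assms by (simp add: powr_minus_divide)
  finally show ?thesis by (simp add: power_mult_distrib k2)
qed

lemma k2_term_bound:
  fixes \<nu> :: nat and x y :: real
  assumes "1 \<le> \<nu>" "0 \<le> y" "x ^ 6 \<le> 9 * real \<nu> ^ 2 * y ^ 3"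
  shows "8 * (k2 * real \<nu> powr (-2/3)) * x ^ 2 \<le> y"
proof (rule power_le_imp_le_base[where n = 2])
  have "(8 * (k2 * real \<nu> powr (-2/3)) * x ^ 2) ^ 3 = x ^ 6 / (9 * real \<nu> ^ 2)"
    using k2_term_cube[OF assms(1)] by (simp add: power_mult_distrib flip: power_mult)
  also have "\<dots> \<le> y ^ 3" using assms(1,3) by (simp add: divide_le_eq mult_ac)
  finally show "(8 * (k2 * real \<nu> powr (-2/3)) * x ^ 2) ^ Suc 2 \<le> y ^ Suc 2" by simp
qed (fact assms(2))

lemma centered_sizes_same_block:
  fixes h T b :: nat and g :: real
  assumes "2 * T + 1 \<le> h" "0 \<le> g" "8 * g * real h ^ 2 \<le> real h - 2 * real T ^ 2" "b < 2 * T + 1"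
  shows "(1/4 + g) * real (2 * h * (2 * h - 1)) \<le> real ((h + T - b) * (2 * h - (h + T - b)))"
proof -
  let ?u = "real T - real b"
  have "?u ^ 2 \<le> real T ^ 2" using assms(4) by (intro power2_le_iff_abs_le[THEN iffD2]) auto
  have cast: "real (h + T - b) = real h + ?u" "real (2 * h - (h + T - b)) = real h - ?u"
    using assms(1,4) by (simp_all add: of_nat_diff)
  have "real ((h + T - b) * (2 * h - (h + T - b))) = (real h + ?u) * (real h - ?u)"
    by (simp only: of_nat_mult cast)
  also have "\<dots> = real h ^ 2 - ?u ^ 2" by (simp add: power2_eq_square algebra_simps)
  finally have rhs: "real h ^ 2 - real T ^ 2 \<le> real ((h + T - b) * (2 * h - (h + T - b)))"
    using \<open>?u ^ 2 \<le> real T ^ 2\<close> by linarith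
  have "g * (2 * real h) \<ge> 0" using assms(2) by simp
  then have "(1/4 + g) * (2 * real h * (2 * real h - 1)) \<le> real h ^ 2 - real h / 2 + 4 * g * real h ^ 2"
    by (simp add: power2_eq_square algebra_simps)
  also have "\<dots> \<le> real h ^ 2 - real T ^ 2" using assms(3) by simp
  finally show ?thesis
    using rhs assms(1) by (simp add: of_nat_diff)
qed

lemma centered_sizes_distinct_blocks:
  fixes h T b d :: nat and g :: real
  assumes "2 * T + 1 \<le> h" "0 \<le> g" "8 * g * real h ^ 2 \<le> real h - 2 * real T ^ 2"
    and "b < d" "d < 2 * T + 1"
  shows "(1/4 + g) * real (2 * h * (2 * h)) \<le> real ((h + T - b) * (2 * h - (h + T - d)))"
proof -
  let ?u = "real T - real b"
  have "?u ^ 2 \<le> real T ^ 2" using assms(4,5) by (intro power2_le_iff_abs_le[THEN iffD2]) auto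
  have "real (h + T - b) = real h + ?u" "real (2 * h - (h + T - d)) = real h - real T + real d"
    using assms(1,4,5) by (simp_all add: of_nat_diff)
  then have "real ((h + T - b) * (2 * h - (h + T - d))) = (real h + ?u) * (real h - real T + real d)"
    by simp
  also have "\<dots> \<ge> (real h + ?u) * (real h - ?u + 1)"
    using assms(1,4,5) by (intro mult_left_mono) auto
  finally have "real h ^ 2 + real h - real T ^ 2 - real T \<le> real ((h + T - b) * (2 * h - (h + T - d)))"
    using \<open>?u ^ 2 \<le> real T ^ 2\<close> assms(4,5) by (simp add: power2_eq_square algebra_simps)
  moreover have "(1/4 + g) * real (2 * h * (2 * h)) = real h ^ 2 + 4 * g * real h ^ 2"
    by (simp add: power2_eq_square algebra_simps)
  ultimately show ?thesis using assms(1,3) by linarith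
qed

theorem mainTheorem15:
  fixes \<nu> :: nat
  assumes "\<nu> \<ge> 1"
  shows "c_nu \<nu> \<ge> ereal (1/4 + k2 * real \<nu> powr (-2/3))"
proof -
  let ?g = "k2 * real \<nu> powr (-2/3)"
  obtain h T where hT: "\<nu> \<le> 2 * h * (2 * T + 1)" "2 * T + 1 \<le> h" "2 * real T ^ 2 \<le> real h"
    "real h ^ 6 \<le> 9 * real \<nu> ^ 2 * (real h - 2 * real T ^ 2) ^ 3"
    using block_parameters[OF assms] .
  have "0 \<le> ?g" by (simp add: k2_def)
  have "8 * ?g * real h ^ 2 \<le> real h - 2 * real T ^ 2"
    using k2_term_bound[OF assms _ hT(4)] hT(3) by simp
  note centered = centered_sizes_same_block[OF hT(2) \<open>0 \<le> ?g\<close> this]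
    centered_sizes_distinct_blocks[OF hT(2) \<open>0 \<le> ?g\<close> this]
  have "(1/4 + ?g) * total_weight A w \<le> mac V A w"
    if D: "weighted_digraph V A w" and "acyclic A" "longest_path_vertices V A \<nu>" for V A w
  proof -
    have "A \<subseteq> V \<times> V" using D unfolding weighted_digraph_def by simp
    then obtain f where "\<And>v. v \<in> V \<Longrightarrow> f v < \<nu>" "\<And>u v. (u, v) \<in> A \<Longrightarrow> f u < f v"
      using acyclic_level_function \<open>acyclic A\<close> \<open>longest_path_vertices V A \<nu>\<close> by blast
    then show ?thesis
      using mac_ge_of_level_function[OF D, of f "2 * h" "2 * T + 1" "\<lambda>b. h + T - b"]
        centered hT(1,2) by fastforce
  qed
  then have "ereal (1/4 + ?g) \<in> {ereal c | c. c \<ge> 0 \<and>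
     (\<forall>V A w. weighted_digraph V A w \<and> acyclic A \<and> longest_path_vertices V A \<nu>
        \<longrightarrow> mac V A w \<ge> c * total_weight A w)}"
    using \<open>0 \<le> ?g\<close> by auto
  then show ?thesis unfolding c_nu_def by (rule Sup_upper)
qed

end
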